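(* Let $(S,d)$ be a complete metric space with a Hausdorff topology $\sigma$ compatible with $d$, and let $\phi,\phi_\epsilon:S\to(-\infty,+\infty]$ ($\epsilon>0$) have nonempty effective domains. Suppose there exist $A,B>0$, $u_\star\in S$ with $\phi_\epsilon(\cdot)\ge-A-Bd^2(\cdot,u_\star)$ for all $\epsilon>0$; that each $\phi_\epsilon$ satisfies (i) $\sup_{n,m}d(u_n,u_m)<+\infty$, $u_n\stackrel{\sigma}{\rightharpoonup}u$ $\Rightarrow$ $\liminf_n\phi_\epsilon(u_n)\ge\phi_\epsilon(u)$, and (ii) $\sup_{n,m}\{d(u_n,u_m),\phi_\epsilon(u_n)\}<+\infty$ $\Rightarrow$ some subsequence of $(u_n)$ $\sigma$-converges in $S$; and that the local slopes satisfy: whenever $\epsilon_n\to0$ and $u_n\stackrel{\sigma}{\rightharpoonup}u$, $\liminf_n|\partial\phi_{\epsilon_n}|(u_n)\ge|\partial\phi|(u)$. Then for every choice $\epsilon(\tau)>0$ with $\epsilon(\tau)\to0$ as $\tau\to0$: for all $u,u_\tau\in S$ with $u_\tau\stackrel{\sigma}{\rightharpoonup}u$ and $\sup_\tau\{\phi_{\epsilon(\tau)}(u_\tau),d(u_\tau,u)\}<+\infty$, $$\liminf_{\tau\to0}\frac{\phi_{\epsilon(\tau)}(u_\tau)-\mathcal{Y}_\tau\phi_{\epsilon(\tau)}(u_\tau)}{\tau}\ge\frac12|\partial^-\phi|^2(u).$$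
   Context: $\sigma$ compatible with $d$: if $u_n\stackrel{\sigma}{\rightharpoonup}u$, $v_n\stackrel{\sigma}{\rightharpoonup}v$ then $\liminf_n d(u_n,v_n)\ge d(u,v)$; if $d(u_n,v_n)\to0$ and $u_n\stackrel{\sigma}{\rightharpoonup}u$ then $v_n\stackrel{\sigma}{\rightharpoonup}u$. Local slope $|\partial f|(v)=\limsup_{w\stackrel{d}{\to}v}\frac{(f(v)-f(w))^+}{d(v,w)}$ for $f(v)<\infty$; relaxed slope $|\partial^-f|(u)=\inf\{\liminf_n|\partial f|(u_n): u_n\stackrel{\sigma}{\rightharpoonup}u,\ \sup_n\{d(u_n,u),f(u_n)\}<+\infty\}$; $\mathcal{Y}_\tau f(u)=\inf_{v\in S}\{f(v)+\frac1{2\tau}d^2(v,u)\}$. *)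

theory Defs
  imports "HOL-Analysis.Analysis"
begin

text \<open>Local slope of f at v w.r.t. the metric d on S.  Conventions: the slope is
  +\<infinity> outside the effective domain (f v = \<infinity>), and 0 at isolated points.\<close>
definition local_slope :: "'a set \<Rightarrow> ('a \<Rightarrow> 'a \<Rightarrow> real) \<Rightarrow> ('a \<Rightarrow> ereal) \<Rightarrow> 'a \<Rightarrow> ereal" where
  "local_slope S d f v =
     (if f v = \<infinity> then \<infinity>
      else max 0 (Limsup (atin (Metric_space.mtopology S d) v)
                    (\<lambda>w. max 0 (f v - f w) / ereal (d v w))))"

definition relaxed_slope :: "'a set \<Rightarrow> ('a \<Rightarrow> 'a \<Rightarrow> real) \<Rightarrow> 'a topology \<Rightarrow> ('a \<Rightarrow> ereal) \<Rightarrow> 'a \<Rightarrow> ereal" where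
  "relaxed_slope S d \<sigma> f u =
     (INF un \<in> {un :: nat \<Rightarrow> 'a. range un \<subseteq> S \<and> limitin \<sigma> un u sequentially \<and>
                  (\<exists>C::real. \<forall>n. d (un n) u \<le> C \<and> f (un n) \<le> ereal C)}.
        Liminf sequentially (\<lambda>n. local_slope S d f (un n)))"

definition yosida :: "'a set \<Rightarrow> ('a \<Rightarrow> 'a \<Rightarrow> real) \<Rightarrow> real \<Rightarrow> ('a \<Rightarrow> ereal) \<Rightarrow> 'a \<Rightarrow> ereal" where
  "yosida S d \<tau> f u = (INF v \<in> S. f v + ereal ((d v u)\<^sup>2 / (2 * \<tau>)))"

definition compatible :: "'a set \<Rightarrow> ('a \<Rightarrow> 'a \<Rightarrow> real) \<Rightarrow> 'a topology \<Rightarrow> bool" where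
  "compatible S d \<sigma> \<longleftrightarrow>
     (\<forall>un vn u v. range un \<subseteq> S \<and> range vn \<subseteq> S \<and> u \<in> S \<and> v \<in> S \<and>
         limitin \<sigma> un u sequentially \<and> limitin \<sigma> vn v sequentially \<longrightarrow>
         Liminf sequentially (\<lambda>n. ereal (d (un n) (vn n))) \<ge> ereal (d u v)) \<and>
     (\<forall>un vn u. range un \<subseteq> S \<and> range vn \<subseteq> S \<and> u \<in> S \<and>
         (\<lambda>n. d (un n) (vn n)) \<longlonglongrightarrow> 0 \<and> limitin \<sigma> un u sequentially \<longrightarrow>
         limitin \<sigma> vn u sequentially)"

end

(* For 8B\<tau> \<le> 1 the Moreau-Yosida problem for f = \<phi>\<epsilon>(\<epsilon>(\<tau>)) centred at v = u\<tau>(\<tau>) has a minimizer: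
   the quadratic lower bound keeps minimizing sequences bounded, and \<sigma>-compactness together with
   \<sigma>-lower semicontinuity (and the compatibility of \<sigma> with d) lets them converge to a minimizer w.
   At a minimizer for the parameter r the local slope of f is at most d(w,v)/r.  Since r \<mapsto> Y_r f(v)
   decreases at rate d\<^sup>2(w_r,v)/(2r\<^sup>2), telescoping over the grid r = \<tau>\<theta>^k produces one such minimizer
   with \<onehalf>\<theta>\<^sup>2(d(w,v)/r)\<^sup>2 \<le> (f(v) - Y_\<tau> f(v))/\<tau> and d\<^sup>2(w,v) = O(\<tau>).  Along \<tau>_n \<rightarrow> 0 with bounded
   quotients these minimizers are d-close to u\<tau>(\<tau>_n), hence \<sigma>-converge to u, and the lower
   semicontinuity of the slopes gives \<onehalf>\<theta>\<^sup>2|\<partial>\<phi>|\<^sup>2(u) \<le> c; letting \<theta> \<rightarrow> 1 and using |\<partial>\<^sup>-\<phi>|(u) \<le> |\<partial>\<phi>|(u)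
   concludes. *)

theory Submission
  imports Defs
begin

lemma ereal_power2_mono: "0 \<le> (x::ereal) \<Longrightarrow> x \<le> y \<Longrightarrow> x\<^sup>2 \<le> y\<^sup>2"
  by (cases x; cases y) (auto intro: mult_mono simp: power2_eq_square)

lemma limitin_compose_filterlim:
  "limitin X f l F \<Longrightarrow> filterlim g F G \<Longrightarrow> limitin X (\<lambda>n. f (g n)) l G"
  unfolding limitin_def filterlim_iff by auto

lemma le_Liminf_at_right_sequentially:
  fixes G :: "real \<Rightarrow> ereal"
  assumes "0 < b"
    and seq: "\<And>T c. (\<And>n. 0 < T n) \<Longrightarrow> (\<And>n. T n < b) \<Longrightarrow> T \<longlonglongrightarrow> 0 \<Longrightarrow>
              (\<And>n. G (T n) \<le> ereal c) \<Longrightarrow> L \<le> ereal c"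
  shows "L \<le> Liminf (at_right 0) G"
  unfolding le_Liminf_iff
proof (intro allI impI)
  fix y assume "y < L"
  then obtain c where yc: "y < ereal c" and cL: "ereal c < L"
    using ereal_dense2 by blast
  have "\<forall>\<^sub>F \<tau> in at_right 0. ereal c < G \<tau>"
  proof (rule ccontr)
    assume "\<not> ?thesis"
    then have "\<exists>\<tau>. 0 < \<tau> \<and> \<tau> < min (1 / Suc n) b \<and> G \<tau> \<le> ereal c" for n
      using \<open>0 < b\<close> unfolding eventually_at_right_field
      by (metis min_less_iff_conj not_less of_nat_0_less_iff zero_less_Suc zero_less_divide_1_iff)
    then obtain T where T: "\<And>n. 0 < T n" "\<And>n. T n < min (1 / Suc n) b" "\<And>n. G (T n) \<le> ereal c"
      by metis
    have "T \<longlonglongrightarrow> 0"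
    proof (rule tendsto_sandwich[of "\<lambda>_. 0" _ _ "\<lambda>n. 1 / Suc n"])
      show "\<forall>\<^sub>F n in sequentially. 0 \<le> T n" "\<forall>\<^sub>F n in sequentially. T n \<le> 1 / Suc n"
        using T(1,2) by (auto intro!: always_eventually less_imp_le)
      show "(\<lambda>n. 1 / real (Suc n)) \<longlonglongrightarrow> 0"
        using LIMSEQ_inverse_real_of_nat by (simp add: inverse_eq_divide)
    qed simp
    with T have "L \<le> ereal c"
      by (intro seq) auto
    with cL show False by simp
  qed
  then show "\<forall>\<^sub>F \<tau> in at_right 0. y < G \<tau>"
    by eventually_elim (use yc in auto)
qed

lemma local_slope_nonneg: "0 \<le> local_slope S d f v"
  unfolding local_slope_def by auto

lemma relaxed_slope_nonneg: "0 \<le> relaxed_slope S d \<sigma> f u"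
  unfolding relaxed_slope_def
  by (intro INF_greatest Liminf_bounded always_eventually allI local_slope_nonneg)

lemma relaxed_slope_le_local_slope:
  assumes "u \<in> S" "topspace \<sigma> = S" "f u \<noteq> -\<infinity>"
  shows "relaxed_slope S d \<sigma> f u \<le> local_slope S d f u"
proof (cases "f u")
  case (real a)
  have "(\<lambda>_. u) \<in> {un. range un \<subseteq> S \<and> limitin \<sigma> un u sequentially \<and>
                  (\<exists>C::real. \<forall>n. d (un n) u \<le> C \<and> f (un n) \<le> ereal C)}"
    using assms real by (auto intro!: exI[of _ "max (d u u) a"])
  then have "relaxed_slope S d \<sigma> f u \<le> Liminf sequentially (\<lambda>_. local_slope S d f u)"
    unfolding relaxed_slope_def by (rule INF_lower)
  then show ?thesis
    by (simp add: Liminf_const)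
qed (use assms in \<open>simp_all add: local_slope_def\<close>)

definition yosida_minimizer ::
    "'a set \<Rightarrow> ('a \<Rightarrow> 'a \<Rightarrow> real) \<Rightarrow> real \<Rightarrow> ('a \<Rightarrow> ereal) \<Rightarrow> 'a \<Rightarrow> 'a \<Rightarrow> bool" where
  "yosida_minimizer S d \<tau> f v w \<longleftrightarrow>
     w \<in> S \<and> (\<forall>x\<in>S. f w + ereal ((d w v)\<^sup>2 / (2 * \<tau>)) \<le> f x + ereal ((d x v)\<^sup>2 / (2 * \<tau>)))"

lemma yosida_le: "w \<in> S \<Longrightarrow> yosida S d \<tau> f v \<le> f w + ereal ((d w v)\<^sup>2 / (2 * \<tau>))"
  unfolding yosida_def by (rule INF_lower)

lemma yosida_minimizer_yosida_eq:
  "yosida_minimizer S d \<tau> f v w \<Longrightarrow> yosida S d \<tau> f v = f w + ereal ((d w v)\<^sup>2 / (2 * \<tau>))"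
  unfolding yosida_def yosida_minimizer_def by (auto intro!: antisym INF_lower INF_greatest)

context Metric_space
begin

lemma yosida_le_self: "v \<in> M \<Longrightarrow> yosida M d \<tau> f v \<le> f v"
  using yosida_le[of v M d \<tau> f v] by simp

lemma yosida_minimizer_difference_quotient:
  assumes min: "yosida_minimizer M d \<tau> f v w" and "v \<in> M" "x \<in> M" "x \<noteq> w" "0 < \<tau>"
    and fw: "f w = ereal a" and fx: "f x = ereal b"
  shows "max 0 (a - b) / d w x \<le> (2 * d w v + d w x) / (2 * \<tau>)"
proof -
  have w: "w \<in> M" using min by (simp add: yosida_minimizer_def)
  have dpos: "0 < d w x" using w \<open>x \<in> M\<close> \<open>x \<noteq> w\<close> by simp
  have "a + (d w v)\<^sup>2 / (2 * \<tau>) \<le> b + (d x v)\<^sup>2 / (2 * \<tau>)"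
    using min \<open>x \<in> M\<close> fw fx by (auto simp: yosida_minimizer_def)
  then have "a - b \<le> ((d x v)\<^sup>2 - (d w v)\<^sup>2) / (2 * \<tau>)"
    by (simp add: diff_divide_distrib)
  also have "(d x v)\<^sup>2 - (d w v)\<^sup>2 = (d x v - d w v) * (d x v + d w v)"
    by (simp add: power2_eq_square algebra_simps)
  also have "\<dots> \<le> d w x * (2 * d w v + d w x)"
  proof -
    have "d x v \<le> d w v + d w x"
      using triangle[OF \<open>x \<in> M\<close> w \<open>v \<in> M\<close>] commute[of x w] by simp
    then show ?thesis
      by (intro mult_mono) auto
  qed
  finally have "a - b \<le> d w x * (2 * d w v + d w x) / (2 * \<tau>)"
    using \<open>0 < \<tau>\<close> by (simp add: divide_right_mono)
  then have "max 0 (a - b) \<le> d w x * ((2 * d w v + d w x) / (2 * \<tau>))"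
    using \<open>0 < \<tau>\<close> by simp
  then show ?thesis
    using dpos by (simp add: divide_le_eq mult.commute)
qed

lemma local_slope_yosida_minimizer_le:
  assumes min: "yosida_minimizer M d \<tau> f v w" and "v \<in> M" "0 < \<tau>" "f w \<noteq> \<infinity>"
    and proper: "\<And>x. x \<in> M \<Longrightarrow> f x \<noteq> -\<infinity>"
  shows "local_slope M d f w \<le> ereal (d w v / \<tau>)"
proof -
  have w: "w \<in> M" using min by (simp add: yosida_minimizer_def)
  then obtain a where fw: "f w = ereal a"
    using \<open>f w \<noteq> \<infinity>\<close> proper by (cases "f w") auto
  have "Limsup (atin mtopology w) (\<lambda>x. max 0 (f w - f x) / ereal (d w x)) \<le> ereal (d w v / \<tau>)"
  proof (rule ereal_le_epsilon2)
    fix e :: real assume "0 < e"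
    let ?\<eta> = "2 * \<tau> * e"
    have "\<forall>x \<in> mball w ?\<eta> - {w}. max 0 (f w - f x) / ereal (d w x) \<le> ereal (d w v / \<tau>) + ereal e"
    proof
      fix x assume "x \<in> mball w ?\<eta> - {w}"
      then have x: "x \<in> M" "x \<noteq> w" and dx: "d w x < ?\<eta>" by auto
      show "max 0 (f w - f x) / ereal (d w x) \<le> ereal (d w v / \<tau>) + ereal e"
      proof (cases "f x")
        case (real b)
        have "max 0 (a - b) / d w x \<le> (2 * d w v + d w x) / (2 * \<tau>)"
          using yosida_minimizer_difference_quotient[OF min \<open>v \<in> M\<close> x \<open>0 < \<tau>\<close> fw real] .
        also have "\<dots> \<le> d w v / \<tau> + e"
          using dx \<open>0 < \<tau>\<close> by (simp add: field_simps)
        finally have "max 0 (a - b) / d w x \<le> d w v / \<tau> + e" .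
        moreover have "0 < d w x"
          using x w by simp
        ultimately show ?thesis
          using fw real \<open>0 < \<tau>\<close> \<open>0 < e\<close> by (auto simp: max_def split: if_splits)
      qed (use fw proper x \<open>0 < \<tau>\<close> \<open>0 < e\<close> in auto)
    qed
    then have "\<forall>\<^sub>F x in atin mtopology w. max 0 (f w - f x) / ereal (d w x) \<le> ereal (d w v / \<tau>) + ereal e"
      unfolding eventually_atin using w \<open>0 < \<tau>\<close> \<open>0 < e\<close> by (intro disjI2 exI[of _ "mball w ?\<eta>"]) auto
    then show "Limsup (atin mtopology w) (\<lambda>x. max 0 (f w - f x) / ereal (d w x)) \<le> ereal (d w v / \<tau>) + ereal e"
      by (rule Limsup_bounded)
  qed
  then show ?thesis
    unfolding local_slope_def using fw \<open>0 < \<tau>\<close> by simp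
qed

end

text \<open>Pigeonhole on the telescoping sum of the increments of \<open>y\<close> over \<open>k < K\<close>: the weights
  \<open>\<tau> \<theta>\<^sup>k (1 - \<theta>) \<theta>\<close> add up to \<open>\<tau> \<theta> (1 - \<theta>\<^sup>K) \<ge> \<tau> \<theta>\<^sup>2\<close>.\<close>
lemma geometric_telescoping_choice:
  fixes y q :: "nat \<Rightarrow> real"
  assumes "0 < \<tau>" "0 < \<theta>" "\<theta> < 1" "0 < K" "\<theta> ^ K \<le> 1 - \<theta>"
    and step: "\<And>k. \<tau> * \<theta> ^ k * (1 - \<theta>) * \<theta> * q k \<le> y (Suc k) - y k"
    and bound: "\<And>k. y k \<le> b"
  shows "\<exists>k. \<tau> * \<theta>\<^sup>2 * q k \<le> b - y 0"
proof (rule ccontr)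
  define Q where "Q = (b - y 0) / (\<tau> * \<theta>\<^sup>2)"
  assume "\<not> ?thesis"
  then have "Q < q k" for k
    using assms(1,2) by (simp add: Q_def pos_divide_less_eq mult.commute not_le)
  then have "(\<Sum>k<K. \<tau> * \<theta> ^ k * (1 - \<theta>) * \<theta> * Q) < (\<Sum>k<K. \<tau> * \<theta> ^ k * (1 - \<theta>) * \<theta> * q k)"
    using assms(1-4) by (intro sum_strict_mono mult_strict_left_mono) auto
  also have "\<dots> \<le> (\<Sum>k<K. y (Suc k) - y k)"
    by (intro sum_mono step)
  also have "\<dots> = y K - y 0"
    by (rule sum_lessThan_telescope)
  finally have "\<tau> * \<theta> * Q * (1 - \<theta> ^ K) < b - y 0"
    using bound[of K] by (simp add: one_diff_power_eq sum_distrib_left sum_distrib_right ac_simps)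
  moreover have "\<tau> * \<theta> * Q * \<theta> \<le> \<tau> * \<theta> * Q * (1 - \<theta> ^ K)"
    using assms bound[of 0] by (intro mult_left_mono) (auto simp: Q_def)
  moreover have "\<tau> * \<theta> * Q * \<theta> = b - y 0"
    using assms(1,2) by (simp add: Q_def power2_eq_square)
  ultimately show False
    by linarith
qed

context Metric_space
begin

text \<open>A discrete form of De Giorgi's variational interpolation: comparing the Yosida values at
  \<open>t\<^sub>k = \<tau> \<theta>\<^sup>k\<close> and \<open>t\<^sub>k\<^sub>+\<^sub>1\<close> through a minimizer for \<open>t\<^sub>k\<^sub>+\<^sub>1\<close> bounds the increment from below
  by \<open>(t\<^sub>k - t\<^sub>k\<^sub>+\<^sub>1) \<theta> (d(w, v) / t\<^sub>k\<^sub>+\<^sub>1)\<^sup>2 / 2\<close>.\<close>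
lemma yosida_gap_ge_geometric:
  assumes v: "v \<in> M" "f v \<noteq> \<infinity>" "f v \<noteq> -\<infinity>"
    and \<tau>: "0 < \<tau>" and \<theta>: "0 < \<theta>" "\<theta> < 1" "0 < K" "\<theta> ^ K \<le> 1 - \<theta>"
    and minimizers: "\<And>r. 0 < r \<Longrightarrow> r \<le> \<tau> \<Longrightarrow>
                       \<exists>w. yosida_minimizer M d r f v w \<and> f w \<noteq> \<infinity> \<and> f w \<noteq> -\<infinity>"
  shows "\<exists>r w. 0 < r \<and> r \<le> \<tau> \<and> yosida_minimizer M d r f v w \<and> f w \<noteq> \<infinity> \<and>
               ereal (\<tau> * \<theta>\<^sup>2 * ((d w v / r)\<^sup>2 / 2)) \<le> f v - yosida M d \<tau> f v"
proof -
  define t where "t k = \<tau> * \<theta> ^ k" for k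
  have t: "0 < t k" "t k \<le> \<tau>" for k
    using \<tau> \<theta> by (auto simp: t_def power_le_one mult_left_le)
  obtain W where W: "\<And>k. yosida_minimizer M d (t k) f v (W k)" "\<And>k. f (W k) \<noteq> \<infinity>" "\<And>k. f (W k) \<noteq> -\<infinity>"
  proof -
    have "\<forall>k. \<exists>w. yosida_minimizer M d (t k) f v w \<and> f w \<noteq> \<infinity> \<and> f w \<noteq> -\<infinity>"
      using minimizers t by blast
    then show ?thesis
      using that by metis
  qed
  define y where "y k = real_of_ereal (yosida M d (t k) f v)" for k
  have y: "yosida M d (t k) f v = ereal (y k)" for k
    using W[of k] by (cases "f (W k)") (auto simp: y_def yosida_minimizer_yosida_eq)
  obtain a where a: "f v = ereal a"
    using v by (cases "f v") auto
  define q where "q k = (d (W (Suc k)) v / t (Suc k))\<^sup>2 / 2" for k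
  have "\<tau> * \<theta> ^ k * (1 - \<theta>) * \<theta> * q k \<le> y (Suc k) - y k" for k
  proof -
    let ?w = "W (Suc k)"
    have "ereal (y k) \<le> f ?w + ereal ((d ?w v)\<^sup>2 / (2 * t k))"
      using yosida_le[of ?w M d "t k" f v] W(1)[of "Suc k"] y[of k] by (simp add: yosida_minimizer_def)
    moreover have "ereal (y (Suc k)) = f ?w + ereal ((d ?w v)\<^sup>2 / (2 * t (Suc k)))"
      using yosida_minimizer_yosida_eq[OF W(1)] y by metis
    moreover have "\<tau> * \<theta> ^ k * (1 - \<theta>) * \<theta> * q k = (d ?w v)\<^sup>2 / (2 * t (Suc k)) - (d ?w v)\<^sup>2 / (2 * t k)"
      using \<tau> \<theta> by (simp add: q_def t_def field_simps power2_eq_square)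
    ultimately show ?thesis
      using W(2,3)[of "Suc k"] by (cases "f ?w") auto
  qed
  moreover have "y k \<le> a" for k
    using yosida_le_self[OF v(1), of "t k" f] y[of k] a by simp
  ultimately obtain k where "\<tau> * \<theta>\<^sup>2 * q k \<le> a - y 0"
    using geometric_telescoping_choice[OF \<tau> \<theta>] by blast
  moreover have "yosida M d \<tau> f v = ereal (y 0)"
    using y[of 0] by (simp add: t_def)
  ultimately show ?thesis
    using t W a by (intro exI[of _ "t (Suc k)"] exI[of _ "W (Suc k)"]) (auto simp: q_def)
qed

end

locale coercive_lsc_functional = Metric_space M d for M :: "'a set" and d +
  fixes \<sigma> :: "'a topology" and f :: "'a \<Rightarrow> ereal" and A B :: real and ustar :: 'a
  assumes topspace_\<sigma>: "topspace \<sigma> = M" and compat: "compatible M d \<sigma>"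
    and B_pos: "0 < B" and ustar: "ustar \<in> M"
    and quadratic_lower_bound: "\<And>x. x \<in> M \<Longrightarrow> ereal (- A - B * (d x ustar)\<^sup>2) \<le> f x"
    and lsc: "\<And>un u. range un \<subseteq> M \<Longrightarrow> u \<in> M \<Longrightarrow> (\<exists>C. \<forall>n m. d (un n) (un m) \<le> C) \<Longrightarrow>
                limitin \<sigma> un u sequentially \<Longrightarrow> f u \<le> Liminf sequentially (\<lambda>n. f (un n))"
    and compact_sublevels: "\<And>un :: nat \<Rightarrow> 'a. range un \<subseteq> M \<Longrightarrow>
                (\<exists>C::real. \<forall>n m. d (un n) (un m) \<le> C \<and> f (un n) \<le> ereal C) \<Longrightarrow>
                \<exists>r u. strict_mono r \<and> u \<in> M \<and> limitin \<sigma> (un \<circ> r) u sequentially"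
begin

lemma not_minf: "x \<in> M \<Longrightarrow> f x \<noteq> -\<infinity>"
  using quadratic_lower_bound[of x] by auto

lemma bounded_pairwise_dist:
  assumes "range z \<subseteq> M" "v \<in> M" "\<And>j. d (z j) v \<le> D"
  shows "d (z n) (z m) \<le> 2 * D"
proof -
  have "d (z n) (z m) \<le> d (z n) v + d v (z m)"
    using assms by (intro triangle) auto
  then show ?thesis
    using assms(3)[of n] assms(3)[of m] commute[of v "z m"] by linarith
qed

text \<open>For \<open>8 B \<tau> \<le> 1\<close> the penalty \<open>d\<^sup>2(\<cdot>, v) / (2\<tau>)\<close> absorbs the quadratic lower bound of \<open>f\<close>
  with half of itself to spare.\<close>
lemma penalized_lower_bound:
  assumes "v \<in> M" "d v ustar \<le> R" "0 < \<tau>" "8 * B * \<tau> \<le> 1" "x \<in> M"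
  shows "ereal (- A - 2 * B * R\<^sup>2 + (d x v)\<^sup>2 / (4 * \<tau>)) \<le> f x + ereal ((d x v)\<^sup>2 / (2 * \<tau>))"
proof -
  have "d x ustar \<le> d x v + R"
    using triangle[OF \<open>x \<in> M\<close> \<open>v \<in> M\<close> ustar] assms(2) by linarith
  then have "(d x ustar)\<^sup>2 \<le> (d x v + R)\<^sup>2"
    by (simp add: power_mono)
  also have "\<dots> \<le> 2 * (d x v)\<^sup>2 + 2 * R\<^sup>2"
    using sum_squares_ge_zero[of "d x v - R" 0] by (simp add: power2_eq_square algebra_simps)
  finally have "B * (d x ustar)\<^sup>2 \<le> B * (2 * (d x v)\<^sup>2 + 2 * R\<^sup>2)"
    using B_pos by (simp add: mult_left_mono)
  moreover have "2 * B * (d x v)\<^sup>2 \<le> (d x v)\<^sup>2 / (4 * \<tau>)"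
  proof -
    have "2 * B * (d x v)\<^sup>2 * (4 * \<tau>) = (8 * B * \<tau>) * (d x v)\<^sup>2" by simp
    also have "\<dots> \<le> (d x v)\<^sup>2" using assms(3,4) B_pos by (intro mult_left_le_one_le) auto
    finally show ?thesis using assms(3) by (simp add: field_simps)
  qed
  moreover have "(d x v)\<^sup>2 / (2 * \<tau>) = (d x v)\<^sup>2 / (4 * \<tau>) + (d x v)\<^sup>2 / (4 * \<tau>)"
    using assms(3) by (simp add: field_simps)
  ultimately have "- A - 2 * B * R\<^sup>2 + (d x v)\<^sup>2 / (4 * \<tau>) \<le> - A - B * (d x ustar)\<^sup>2 + (d x v)\<^sup>2 / (2 * \<tau>)"
    by (simp add: algebra_simps)
  then have "ereal (- A - 2 * B * R\<^sup>2 + (d x v)\<^sup>2 / (4 * \<tau>))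
      \<le> ereal (- A - B * (d x ustar)\<^sup>2) + ereal ((d x v)\<^sup>2 / (2 * \<tau>))"
    by simp
  also have "\<dots> \<le> f x + ereal ((d x v)\<^sup>2 / (2 * \<tau>))"
    using quadratic_lower_bound[OF \<open>x \<in> M\<close>] by (rule add_right_mono)
  finally show ?thesis .
qed

lemma penalized_limit_le:
  assumes z: "range z \<subseteq> M" "\<And>j. f (z j) = ereal (a j)" "\<And>j. d (z j) v \<le> D"
    and "v \<in> M" "w \<in> M" "0 < \<tau>" and zw: "limitin \<sigma> z w sequentially"
    and \<delta>: "(\<lambda>j. d (z j) v) \<longlonglongrightarrow> \<delta>"
    and y: "(\<lambda>j. a j + (d (z j) v)\<^sup>2 / (2 * \<tau>)) \<longlonglongrightarrow> y"
  shows "f w + ereal ((d w v)\<^sup>2 / (2 * \<tau>)) \<le> ereal y"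
proof -
  have "(\<lambda>j. a j + (d (z j) v)\<^sup>2 / (2 * \<tau>) - (d (z j) v)\<^sup>2 / (2 * \<tau>)) \<longlonglongrightarrow> y - \<delta>\<^sup>2 / (2 * \<tau>)"
    using \<open>0 < \<tau>\<close> by (intro tendsto_intros y \<delta>) simp
  then have "Liminf sequentially (\<lambda>j. f (z j)) = ereal (y - \<delta>\<^sup>2 / (2 * \<tau>))"
    unfolding z(2) by (intro lim_imp_Liminf tendsto_ereal) simp_all
  moreover have "f w \<le> Liminf sequentially (\<lambda>j. f (z j))"
    using bounded_pairwise_dist[OF z(1) \<open>v \<in> M\<close> z(3)] z(1) \<open>w \<in> M\<close> zw by (intro lsc) auto
  moreover have "ereal (d w v) \<le> Liminf sequentially (\<lambda>j. ereal (d (z j) v))"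
    using compat z(1) \<open>v \<in> M\<close> \<open>w \<in> M\<close> zw topspace_\<sigma>
    unfolding compatible_def by (auto simp: limitin_const_iff)
  moreover have "Liminf sequentially (\<lambda>j. ereal (d (z j) v)) = ereal \<delta>"
    by (intro lim_imp_Liminf tendsto_ereal \<delta>) simp
  ultimately have "f w \<le> ereal (y - \<delta>\<^sup>2 / (2 * \<tau>))" "d w v \<le> \<delta>"
    by auto
  moreover have "(d w v)\<^sup>2 / (2 * \<tau>) \<le> \<delta>\<^sup>2 / (2 * \<tau>)"
    using \<open>d w v \<le> \<delta>\<close> \<open>0 < \<tau>\<close> by (simp add: power_mono divide_right_mono)
  ultimately show ?thesis
    by (cases "f w") auto
qed

lemma yosida_minimizing_sequence:
  assumes "v \<in> M" "f v \<noteq> \<infinity>" "0 < \<tau>" "8 * B * \<tau> \<le> 1"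
  obtains y z a D where "yosida M d \<tau> f v = ereal y" "range z \<subseteq> M" "\<And>j. f (z j) = ereal (a j)"
    "\<And>j. d (z j) v \<le> D" "\<And>j. a j \<le> D" "(\<lambda>j. a j + (d (z j) v)\<^sup>2 / (2 * \<tau>)) \<longlonglongrightarrow> y"
proof -
  define c where "c = - A - 2 * B * (d v ustar)\<^sup>2"
  have low: "ereal (c + (d x v)\<^sup>2 / (4 * \<tau>)) \<le> f x + ereal ((d x v)\<^sup>2 / (2 * \<tau>))" if "x \<in> M" for x
    unfolding c_def using penalized_lower_bound[OF \<open>v \<in> M\<close> order_refl assms(3,4) that] .
  have "ereal c \<le> yosida M d \<tau> f v"
    unfolding yosida_def
  proof (rule INF_greatest)
    fix x assume "x \<in> M"
    have "ereal c \<le> ereal (c + (d x v)\<^sup>2 / (4 * \<tau>))"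
      using \<open>0 < \<tau>\<close> by simp
    then show "ereal c \<le> f x + ereal ((d x v)\<^sup>2 / (2 * \<tau>))"
      using low[OF \<open>x \<in> M\<close>] by (rule order_trans)
  qed
  moreover have "yosida M d \<tau> f v \<le> f v"
    using yosida_le_self[OF \<open>v \<in> M\<close>] .
  ultimately obtain y where y: "yosida M d \<tau> f v = ereal y"
    using \<open>f v \<noteq> \<infinity>\<close> by (cases "yosida M d \<tau> f v") auto
  have "\<exists>x\<in>M. f x + ereal ((d x v)\<^sup>2 / (2 * \<tau>)) < ereal (y + 1 / Suc j)" for j
    using y by (simp flip: INF_less_iff add: yosida_def[symmetric])
  then obtain z where z: "\<And>j. z j \<in> M" "\<And>j. f (z j) + ereal ((d (z j) v)\<^sup>2 / (2 * \<tau>)) < ereal (y + 1 / Suc j)"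
    by metis
  define a where "a j = real_of_ereal (f (z j))" for j
  have fz: "f (z j) = ereal (a j)" for j
    using z(2)[of j] not_minf[OF z(1)] unfolding a_def by (cases "f (z j)") auto
  have upper: "a j + (d (z j) v)\<^sup>2 / (2 * \<tau>) < y + 1 / Suc j" for j
    using z(2)[of j] fz[of j] by simp
  have lower: "y \<le> a j + (d (z j) v)\<^sup>2 / (2 * \<tau>)" for j
    using yosida_le[OF z(1)[of j], of d \<tau> f v] y fz[of j] by simp
  have "(\<lambda>j. a j + (d (z j) v)\<^sup>2 / (2 * \<tau>)) \<longlonglongrightarrow> y"
  proof (rule tendsto_sandwich[of "\<lambda>_. y" _ _ "\<lambda>j. y + 1 / Suc j"])
    show "(\<lambda>j. y + 1 / real (Suc j)) \<longlonglongrightarrow> y"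
      using tendsto_add[OF tendsto_const LIMSEQ_inverse_real_of_nat, of y] by (simp add: inverse_eq_divide)
  qed (use lower upper in \<open>auto intro!: always_eventually less_imp_le\<close>)
  moreover have "(d (z j) v)\<^sup>2 \<le> 4 * \<tau> * (y + 1 - c)" for j
  proof -
    have "c + (d (z j) v)\<^sup>2 / (4 * \<tau>) \<le> a j + (d (z j) v)\<^sup>2 / (2 * \<tau>)"
      using low[OF z(1)[of j]] fz[of j] by simp
    also have "\<dots> < y + 1"
      using upper[of j] by (smt (verit) divide_le_eq_1 of_nat_Suc of_nat_0_le_iff)
    finally show ?thesis
      using \<open>0 < \<tau>\<close> by (simp add: field_simps)
  qed
  then have "d (z j) v \<le> sqrt (4 * \<tau> * (y + 1 - c))" for j
    by (simp add: real_le_rsqrt)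
  moreover have "a j \<le> y + 1" for j
    using upper[of j] \<open>0 < \<tau>\<close>
    by (smt (verit) divide_le_eq_1 divide_nonneg_pos of_nat_Suc of_nat_0_le_iff zero_le_power2)
  ultimately show ?thesis
    using that[of y z a "max (sqrt (4 * \<tau> * (y + 1 - c))) (y + 1)"] y z(1) fz
    by (auto simp: le_max_iff_disj)
qed

lemma yosida_minimizer_exists:
  assumes "v \<in> M" "f v \<noteq> \<infinity>" "0 < \<tau>" "8 * B * \<tau> \<le> 1"
  shows "\<exists>w. yosida_minimizer M d \<tau> f v w \<and> f w \<noteq> \<infinity>"
proof -
  obtain y z a D where y: "yosida M d \<tau> f v = ereal y" and z: "range z \<subseteq> M" "\<And>j. f (z j) = ereal (a j)"
    and D: "\<And>j. d (z j) v \<le> D" "\<And>j. a j \<le> D"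
    and lim: "(\<lambda>j. a j + (d (z j) v)\<^sup>2 / (2 * \<tau>)) \<longlonglongrightarrow> y"
    using yosida_minimizing_sequence[OF assms] by blast
  have "bounded (range (\<lambda>j. d (z j) v))"
    unfolding bounded_real using D(1) by (auto intro!: exI[of _ D])
  then obtain \<delta> r1 where r1: "strict_mono r1" and \<delta>: "((\<lambda>j. d (z j) v) \<circ> r1) \<longlonglongrightarrow> \<delta>"
    using bounded_imp_convergent_subsequence by blast
  have "range (z \<circ> r1) \<subseteq> M"
    using z(1) by auto
  moreover have "\<exists>C::real. \<forall>n m. d ((z \<circ> r1) n) ((z \<circ> r1) m) \<le> C \<and> f ((z \<circ> r1) n) \<le> ereal C"
    using bounded_pairwise_dist[OF z(1) \<open>v \<in> M\<close> D(1)] D(2) z(2)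
    by (intro exI[of _ "max (2 * D) D"]) (simp add: le_max_iff_disj)
  ultimately obtain r2 w where r2: "strict_mono r2" and "w \<in> M" and zw: "limitin \<sigma> (z \<circ> r1 \<circ> r2) w sequentially"
    using compact_sublevels by blast
  have hw: "f w + ereal ((d w v)\<^sup>2 / (2 * \<tau>)) \<le> ereal y"
  proof (rule penalized_limit_le[of "z \<circ> r1 \<circ> r2" "a \<circ> r1 \<circ> r2"])
    show "(\<lambda>j. d ((z \<circ> r1 \<circ> r2) j) v) \<longlonglongrightarrow> \<delta>"
      using LIMSEQ_subseq_LIMSEQ[OF \<delta> r2] by (simp add: o_def)
    show "(\<lambda>j. (a \<circ> r1 \<circ> r2) j + (d ((z \<circ> r1 \<circ> r2) j) v)\<^sup>2 / (2 * \<tau>)) \<longlonglongrightarrow> y"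
      using LIMSEQ_subseq_LIMSEQ[OF lim strict_mono_o[OF r1 r2]] by (simp add: o_def)
  qed (use z D(1) \<open>v \<in> M\<close> \<open>w \<in> M\<close> \<open>0 < \<tau>\<close> zw in \<open>simp_all add: image_subset_iff\<close>)
  have "f w + ereal ((d w v)\<^sup>2 / (2 * \<tau>)) \<le> f x + ereal ((d x v)\<^sup>2 / (2 * \<tau>))" if "x \<in> M" for x
    using hw yosida_le[OF that, of d \<tau> f v] unfolding y by (rule order_trans)
  then have "yosida_minimizer M d \<tau> f v w"
    using \<open>w \<in> M\<close> unfolding yosida_minimizer_def by blast
  moreover have "f w \<noteq> \<infinity>"
    using hw by auto
  ultimately show ?thesis
    by blast
qed

lemma yosida_minimizer_dist_le:
  assumes min: "yosida_minimizer M d \<tau> f v w" and "v \<in> M" "f v \<le> ereal C" "d v ustar \<le> R"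
    and "0 < \<tau>" "8 * B * \<tau> \<le> 1"
  shows "(d w v)\<^sup>2 \<le> 4 * \<tau> * (C + A + 2 * B * R\<^sup>2)"
proof -
  have "w \<in> M"
    using min by (simp add: yosida_minimizer_def)
  have "ereal (- A - 2 * B * R\<^sup>2 + (d w v)\<^sup>2 / (4 * \<tau>)) \<le> f w + ereal ((d w v)\<^sup>2 / (2 * \<tau>))"
    using penalized_lower_bound[OF \<open>v \<in> M\<close> \<open>d v ustar \<le> R\<close> \<open>0 < \<tau>\<close> \<open>8 * B * \<tau> \<le> 1\<close> \<open>w \<in> M\<close>] .
  also have "\<dots> \<le> f v"
    using min \<open>v \<in> M\<close> by (auto simp: yosida_minimizer_def dest!: bspec[of _ _ v])
  also note \<open>f v \<le> ereal C\<close>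
  finally have "(d w v)\<^sup>2 / (4 * \<tau>) \<le> C + A + 2 * B * R\<^sup>2"
    by simp
  then show ?thesis
    using \<open>0 < \<tau>\<close> by (simp add: field_simps)
qed

lemma yosida_gap_bounds_slope:
  assumes v: "v \<in> M" "f v \<le> ereal C" "d v ustar \<le> R" and \<tau>: "0 < \<tau>" "8 * B * \<tau> \<le> 1"
    and \<theta>: "0 < \<theta>" "\<theta> < 1"
  shows "\<exists>w \<rho>. w \<in> M \<and> local_slope M d f w \<le> ereal \<rho> \<and> (d w v)\<^sup>2 \<le> 4 * \<tau> * (C + A + 2 * B * R\<^sup>2) \<and>
               ereal (\<theta>\<^sup>2 * \<rho>\<^sup>2 / 2) \<le> (f v - yosida M d \<tau> f v) / ereal \<tau>"
proof -
  have "\<forall>\<^sub>F K in sequentially. \<theta> ^ K < 1 - \<theta>"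
    using LIMSEQ_power_zero[of \<theta>] \<theta> by (intro order_tendstoD) auto
  then obtain K0 where K0: "\<And>K. K0 \<le> K \<Longrightarrow> \<theta> ^ K < 1 - \<theta>"
    unfolding eventually_sequentially by blast
  have K: "\<theta> ^ Suc K0 \<le> 1 - \<theta>"
    using K0[of "Suc K0"] by linarith
  have fv: "f v \<noteq> \<infinity>"
    using v(2) by auto
  have small: "8 * B * r \<le> 1" if "r \<le> \<tau>" for r
    using that \<tau>(2) B_pos by (smt (verit) mult_left_mono)
  have minimizers: "\<exists>w. yosida_minimizer M d r f v w \<and> f w \<noteq> \<infinity> \<and> f w \<noteq> -\<infinity>" if "0 < r" "r \<le> \<tau>" for r
    using yosida_minimizer_exists[OF v(1) fv \<open>0 < r\<close> small[OF \<open>r \<le> \<tau>\<close>]] not_minf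
    by (fastforce simp: yosida_minimizer_def)
  obtain r w where r: "0 < r" "r \<le> \<tau>" and min: "yosida_minimizer M d r f v w" and "f w \<noteq> \<infinity>"
    and gap: "ereal (\<tau> * \<theta>\<^sup>2 * ((d w v / r)\<^sup>2 / 2)) \<le> f v - yosida M d \<tau> f v"
    using yosida_gap_ge_geometric[OF v(1) fv not_minf[OF v(1)] \<tau>(1) \<theta> zero_less_Suc K minimizers] by blast
  have "w \<in> M"
    using min by (simp add: yosida_minimizer_def)
  have "local_slope M d f w \<le> ereal (d w v / r)"
    using local_slope_yosida_minimizer_le[OF min v(1) r(1) \<open>f w \<noteq> \<infinity>\<close> not_minf] .
  moreover have "(d w v)\<^sup>2 \<le> 4 * \<tau> * (C + A + 2 * B * R\<^sup>2)"
  proof -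
    have "(d w v)\<^sup>2 \<le> 4 * r * (C + A + 2 * B * R\<^sup>2)"
      using yosida_minimizer_dist_le[OF min v r(1) small[OF r(2)]] .
    moreover from this have "0 \<le> C + A + 2 * B * R\<^sup>2"
      using r(1) by (smt (verit) mult_pos_neg zero_le_power2)
    ultimately show ?thesis
      using r by (smt (verit) mult_right_mono)
  qed
  moreover have "ereal (\<theta>\<^sup>2 * (d w v / r)\<^sup>2 / 2) \<le> (f v - yosida M d \<tau> f v) / ereal \<tau>"
  proof -
    have "ereal (\<theta>\<^sup>2 * (d w v / r)\<^sup>2 / 2) = ereal (\<tau> * \<theta>\<^sup>2 * ((d w v / r)\<^sup>2 / 2)) / ereal \<tau>"
      using \<tau>(1) by simp
    also have "\<dots> \<le> (f v - yosida M d \<tau> f v) / ereal \<tau>"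
      using gap \<tau>(1) by (intro ereal_divide_right_mono) auto
    finally show ?thesis .
  qed
  ultimately show ?thesis
    using \<open>w \<in> M\<close> by blast
qed

end

lemma yosida_gaps_slope_witnesses:
  fixes \<phi>\<epsilon> :: "real \<Rightarrow> 'a \<Rightarrow> ereal"
  assumes adm: "\<And>e. 0 < e \<Longrightarrow> coercive_lsc_functional S d \<sigma> (\<phi>\<epsilon> e) A B ustar"
    and "u \<in> S" and V: "\<And>n. V n \<in> S" "\<And>n. \<phi>\<epsilon> (e n) (V n) \<le> ereal C" "\<And>n. d (V n) u \<le> C"
    and e: "\<And>n. 0 < e n" and T: "\<And>n. 0 < T n" "\<And>n. 8 * B * T n \<le> 1"
    and \<theta>: "0 < \<theta>" "\<theta> < 1"
    and gap: "\<And>n. (\<phi>\<epsilon> (e n) (V n) - yosida S d (T n) (\<phi>\<epsilon> (e n)) (V n)) / ereal (T n) \<le> ereal c"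
  obtains W \<rho> K where "\<And>n. W n \<in> S" "\<And>n. local_slope S d (\<phi>\<epsilon> (e n)) (W n) \<le> ereal (\<rho> n)"
    "\<And>n. (d (W n) (V n))\<^sup>2 \<le> 4 * T n * K" "\<And>n. \<theta>\<^sup>2 * (\<rho> n)\<^sup>2 / 2 \<le> c"
proof -
  define K where "K = C + A + 2 * B * (C + d u ustar)\<^sup>2"
  have "\<exists>w \<rho>. w \<in> S \<and> local_slope S d (\<phi>\<epsilon> (e n)) w \<le> ereal \<rho> \<and> (d w (V n))\<^sup>2 \<le> 4 * T n * K \<and>
          \<theta>\<^sup>2 * \<rho>\<^sup>2 / 2 \<le> c" for n
  proof -
    interpret coercive_lsc_functional S d \<sigma> "\<phi>\<epsilon> (e n)" A B ustar
      using adm e by simp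
    have "d (V n) ustar \<le> C + d u ustar"
      using triangle[OF V(1)[of n] \<open>u \<in> S\<close> ustar] V(3)[of n] by linarith
    then obtain w \<rho> where "w \<in> S" "local_slope S d (\<phi>\<epsilon> (e n)) w \<le> ereal \<rho>" "(d w (V n))\<^sup>2 \<le> 4 * T n * K"
      and "ereal (\<theta>\<^sup>2 * \<rho>\<^sup>2 / 2) \<le> (\<phi>\<epsilon> (e n) (V n) - yosida S d (T n) (\<phi>\<epsilon> (e n)) (V n)) / ereal (T n)"
      using yosida_gap_bounds_slope[OF V(1,2) _ T \<theta>] unfolding K_def by blast
    moreover from order_trans[OF this(4) gap[of n]] have "\<theta>\<^sup>2 * \<rho>\<^sup>2 / 2 \<le> c"
      by simp
    ultimately show ?thesis
      by blast
  qed
  then obtain W where "\<forall>n. \<exists>\<rho>. W n \<in> S \<and> local_slope S d (\<phi>\<epsilon> (e n)) (W n) \<le> ereal \<rho> \<and>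
      (d (W n) (V n))\<^sup>2 \<le> 4 * T n * K \<and> \<theta>\<^sup>2 * \<rho>\<^sup>2 / 2 \<le> c"
    using choice[of "\<lambda>n w. \<exists>\<rho>. w \<in> S \<and> local_slope S d (\<phi>\<epsilon> (e n)) w \<le> ereal \<rho> \<and>
      (d w (V n))\<^sup>2 \<le> 4 * T n * K \<and> \<theta>\<^sup>2 * \<rho>\<^sup>2 / 2 \<le> c"] by blast
  then obtain \<rho> where "\<forall>n. W n \<in> S \<and> local_slope S d (\<phi>\<epsilon> (e n)) (W n) \<le> ereal (\<rho> n) \<and>
      (d (W n) (V n))\<^sup>2 \<le> 4 * T n * K \<and> \<theta>\<^sup>2 * (\<rho> n)\<^sup>2 / 2 \<le> c"
    by (rule choice[THEN exE])
  then show ?thesis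
    using that by blast
qed

lemma ereal_half_power2_le_of_le_sqrt:
  assumes "0 \<le> x" "x \<le> ereal (sqrt (2 * c) / \<theta>)" "0 < \<theta>" "0 \<le> c"
  shows "ereal (\<theta>\<^sup>2) * (ereal (1/2) * x\<^sup>2) \<le> ereal c"
proof -
  obtain a where a: "x = ereal a" "0 \<le> a"
    using assms(1,2) by (cases x) auto
  then have "(\<theta> * a)\<^sup>2 \<le> (sqrt (2 * c))\<^sup>2"
    using assms(2,3) by (intro power_mono) (auto simp: le_divide_eq mult.commute)
  then show ?thesis
    using a \<open>0 \<le> c\<close> by (simp add: power_mult_distrib)
qed

lemma local_slope_le_of_yosida_gaps:
  fixes \<phi> :: "'a \<Rightarrow> ereal" and \<phi>\<epsilon> :: "real \<Rightarrow> 'a \<Rightarrow> ereal"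
  assumes adm: "\<And>e. 0 < e \<Longrightarrow> coercive_lsc_functional S d \<sigma> (\<phi>\<epsilon> e) A B ustar"
    and slope: "\<forall>en un u. (\<forall>n. en n > 0) \<and> en \<longlonglongrightarrow> 0 \<and> range un \<subseteq> S \<and> u \<in> S \<and>
                 limitin \<sigma> un u sequentially \<longrightarrow>
                 Liminf sequentially (\<lambda>n. local_slope S d (\<phi>\<epsilon> (en n)) (un n))
                   \<ge> local_slope S d \<phi> u"
    and "u \<in> S" and V: "\<And>n. V n \<in> S" "limitin \<sigma> V u sequentially"
      "\<And>n. \<phi>\<epsilon> (e n) (V n) \<le> ereal C" "\<And>n. d (V n) u \<le> C"
    and e: "\<And>n. 0 < e n" "e \<longlonglongrightarrow> 0"
    and T: "\<And>n. 0 < T n" "\<And>n. 8 * B * T n \<le> 1" "T \<longlonglongrightarrow> 0"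
    and \<theta>: "0 < \<theta>" "\<theta> < 1"
    and gap: "\<And>n. (\<phi>\<epsilon> (e n) (V n) - yosida S d (T n) (\<phi>\<epsilon> (e n)) (V n)) / ereal (T n) \<le> ereal c"
  shows "ereal (\<theta>\<^sup>2) * (ereal (1/2) * (local_slope S d \<phi> u)\<^sup>2) \<le> ereal c"
proof -
  have adm1: "coercive_lsc_functional S d \<sigma> (\<phi>\<epsilon> 1) A B ustar"
    using adm by simp
  interpret Metric_space S d
    using adm1 by (rule coercive_lsc_functional.axioms(1))
  have compat: "compatible S d \<sigma>"
    using adm1 by (rule coercive_lsc_functional.compat)
  obtain W \<rho> K where W: "\<And>n. W n \<in> S" and slope_W: "\<And>n. local_slope S d (\<phi>\<epsilon> (e n)) (W n) \<le> ereal (\<rho> n)"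
    and dist_W: "\<And>n. (d (W n) (V n))\<^sup>2 \<le> 4 * T n * K" and \<rho>: "\<And>n. \<theta>\<^sup>2 * (\<rho> n)\<^sup>2 / 2 \<le> c"
    using yosida_gaps_slope_witnesses[where \<phi>\<epsilon>=\<phi>\<epsilon> and e=e and V=V and T=T, OF adm \<open>u \<in> S\<close> V(1,3,4) e(1) T(1,2) \<theta> gap] by blast
  have "0 \<le> c"
    using \<rho>[of 0] by (smt (verit) divide_nonneg_pos mult_nonneg_nonneg zero_le_power2)
  have \<rho>_le: "\<rho> n \<le> sqrt (2 * c) / \<theta>" for n
  proof -
    have "(\<theta> * \<rho> n)\<^sup>2 \<le> 2 * c"
      using \<rho>[of n] by (simp add: power_mult_distrib)
    then have "\<theta> * \<rho> n \<le> sqrt (2 * c)"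
      using real_le_rsqrt by blast
    then show ?thesis
      using \<theta> by (simp add: le_divide_eq mult.commute)
  qed
  have "(\<lambda>n. d (V n) (W n)) \<longlonglongrightarrow> 0"
  proof (rule tendsto_sandwich[of "\<lambda>_. 0" _ _ "\<lambda>n. sqrt (4 * T n * K)"])
    show "\<forall>\<^sub>F n in sequentially. d (V n) (W n) \<le> sqrt (4 * T n * K)"
      using dist_W commute by (auto simp: real_le_rsqrt)
    have "(\<lambda>n. sqrt (4 * T n * K)) \<longlonglongrightarrow> sqrt (4 * 0 * K)"
      by (intro tendsto_intros T(3))
    then show "(\<lambda>n. sqrt (4 * T n * K)) \<longlonglongrightarrow> 0"
      by simp
  qed auto
  then have "limitin \<sigma> W u sequentially"
    using compat[unfolded compatible_def, THEN conjunct2, rule_format, of V W u] V(1,2) W \<open>u \<in> S\<close>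
    by auto
  then have "local_slope S d \<phi> u \<le> Liminf sequentially (\<lambda>n. local_slope S d (\<phi>\<epsilon> (e n)) (W n))"
    using slope[rule_format, of e W u] e W \<open>u \<in> S\<close> by auto
  also have "\<dots> \<le> Liminf sequentially (\<lambda>_. ereal (sqrt (2 * c) / \<theta>))"
    using slope_W \<rho>_le by (intro Liminf_mono always_eventually allI order_trans[OF slope_W]) simp
  finally have "local_slope S d \<phi> u \<le> ereal (sqrt (2 * c) / \<theta>)"
    by (simp add: Liminf_const)
  then show ?thesis
    using \<theta>(1) \<open>0 \<le> c\<close> by (intro ereal_half_power2_le_of_le_sqrt local_slope_nonneg)
qed

lemma ereal_le_of_power2_scaled_le:
  fixes x y :: ereal
  assumes "0 \<le> x" and le: "\<And>\<theta>. 0 < \<theta> \<Longrightarrow> \<theta> < 1 \<Longrightarrow> ereal (\<theta>\<^sup>2) * x \<le> y"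
  shows "x \<le> y"
proof (rule ereal_le_mult_one_interval)
  have "0 \<le> ereal ((1/2)\<^sup>2) * x"
    using \<open>0 \<le> x\<close> by (simp add: ereal_zero_le_0_iff)
  then show "y \<noteq> -\<infinity>"
    using le[of "1/2"] by auto
  fix z :: ereal assume "0 < z" "z < 1"
  then obtain r where r: "z = ereal r" "0 < r" "r < 1"
    by (cases z) auto
  have "ereal ((sqrt r)\<^sup>2) * x \<le> y"
    by (rule le) (use r in auto)
  then show "z * x \<le> y"
    using r by simp
qed

lemma local_slope_le_Liminf_yosida_quotient:
  fixes \<phi> :: "'a \<Rightarrow> ereal" and \<phi>\<epsilon> :: "real \<Rightarrow> 'a \<Rightarrow> ereal" and \<epsilon> :: "real \<Rightarrow> real"
  assumes adm: "\<And>e. 0 < e \<Longrightarrow> coercive_lsc_functional S d \<sigma> (\<phi>\<epsilon> e) A B ustar"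
    and slope: "\<forall>en un u. (\<forall>n. en n > 0) \<and> en \<longlonglongrightarrow> 0 \<and> range un \<subseteq> S \<and> u \<in> S \<and>
                 limitin \<sigma> un u sequentially \<longrightarrow>
                 Liminf sequentially (\<lambda>n. local_slope S d (\<phi>\<epsilon> (en n)) (un n))
                   \<ge> local_slope S d \<phi> u"
    and \<epsilon>: "\<forall>\<tau>>0. \<epsilon> \<tau> > 0" "(\<epsilon> \<longlongrightarrow> 0) (at_right 0)"
    and "0 < B" "u \<in> S" and u\<tau>: "\<forall>\<tau>>0. u\<tau> \<tau> \<in> S" "limitin \<sigma> u\<tau> u (at_right 0)"
    and C: "\<forall>\<tau>>0. \<phi>\<epsilon> (\<epsilon> \<tau>) (u\<tau> \<tau>) \<le> ereal C \<and> d (u\<tau> \<tau>) u \<le> C"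
  shows "ereal (1/2) * (local_slope S d \<phi> u)\<^sup>2
           \<le> Liminf (at_right 0) (\<lambda>\<tau>. (\<phi>\<epsilon> (\<epsilon> \<tau>) (u\<tau> \<tau>) - yosida S d \<tau> (\<phi>\<epsilon> (\<epsilon> \<tau>)) (u\<tau> \<tau>)) / ereal \<tau>)"
    (is "?s \<le> Liminf _ ?G")
proof (rule ereal_le_of_power2_scaled_le)
  have "0 \<le> (local_slope S d \<phi> u)\<^sup>2"
    using ereal_power2_mono[OF order_refl local_slope_nonneg[of S d \<phi> u]] by (simp add: power2_eq_square)
  then show "0 \<le> ?s"
    by (simp add: ereal_zero_le_0_iff)
  fix \<theta> :: real assume \<theta>: "0 < \<theta>" "\<theta> < 1"
  show "ereal (\<theta>\<^sup>2) * ?s \<le> Liminf (at_right 0) ?G"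
  proof (rule le_Liminf_at_right_sequentially)
    show "0 < 1 / (8 * B)"
      using \<open>0 < B\<close> by simp
    fix T c assume T: "\<And>n. 0 < T n" "\<And>n. T n < 1 / (8 * B)" "T \<longlonglongrightarrow> 0" and gap: "\<And>n. ?G (T n) \<le> ereal c"
    have T_at: "filterlim T (at_right 0) sequentially"
      using T(1,3) by (auto simp: filterlim_at intro!: always_eventually less_imp_neq[symmetric])
    show "ereal (\<theta>\<^sup>2) * ?s \<le> ereal c"
    proof (rule local_slope_le_of_yosida_gaps[OF adm slope \<open>u \<in> S\<close>, where V="\<lambda>n. u\<tau> (T n)" and e="\<lambda>n. \<epsilon> (T n)"])
      show "limitin \<sigma> (\<lambda>n. u\<tau> (T n)) u sequentially"
        using limitin_compose_filterlim[OF u\<tau>(2) T_at] .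
      show "(\<lambda>n. \<epsilon> (T n)) \<longlonglongrightarrow> 0"
        using filterlim_compose[OF \<epsilon>(2) T_at] .
      show "8 * B * T n \<le> 1" for n
        using T(2)[of n] \<open>0 < B\<close> by (simp add: field_simps)
    qed (use T(1,3) C u\<tau>(1) \<epsilon>(1) gap \<theta> in auto)
  qed
qed

theorem proposition5p2:
  fixes S :: "'a set" and d :: "'a \<Rightarrow> 'a \<Rightarrow> real" and \<sigma> :: "'a topology"
    and \<phi> :: "'a \<Rightarrow> ereal" and \<phi>\<epsilon> :: "real \<Rightarrow> 'a \<Rightarrow> ereal"
    and A B :: real and ustar :: 'a and \<epsilon> :: "real \<Rightarrow> real"
  assumes metric: "Metric_space S d"
    and complete: "Metric_space.mcomplete S d"
    and top: "topspace \<sigma> = S"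
    and haus: "Hausdorff_space \<sigma>"
    and compat: "compatible S d \<sigma>"
    and phi_proper: "\<forall>x\<in>S. \<phi> x \<noteq> -\<infinity>" "\<exists>x\<in>S. \<phi> x \<noteq> \<infinity>"
    and phie_proper: "\<forall>e>0. (\<forall>x\<in>S. \<phi>\<epsilon> e x \<noteq> -\<infinity>) \<and> (\<exists>x\<in>S. \<phi>\<epsilon> e x \<noteq> \<infinity>)"
    and AB: "A > 0" "B > 0" "ustar \<in> S"
    and lower: "\<forall>e>0. \<forall>x\<in>S. \<phi>\<epsilon> e x \<ge> ereal (- A - B * (d x ustar)\<^sup>2)"
    and lsc: "\<forall>e>0. \<forall>un u. range un \<subseteq> S \<and> u \<in> S \<and>
                 (\<exists>C. \<forall>n m. d (un n) (un m) \<le> C) \<and> limitin \<sigma> un u sequentially \<longrightarrow>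
                 Liminf sequentially (\<lambda>n. \<phi>\<epsilon> e (un n)) \<ge> \<phi>\<epsilon> e u"
    and cpt: "\<forall>e>0. \<forall>un :: nat \<Rightarrow> 'a. range un \<subseteq> S \<and>
                 (\<exists>C::real. \<forall>n m. d (un n) (un m) \<le> C \<and> \<phi>\<epsilon> e (un n) \<le> ereal C) \<longrightarrow>
                 (\<exists>r u. strict_mono r \<and> u \<in> S \<and> limitin \<sigma> (un \<circ> r) u sequentially)"
    and slope: "\<forall>en un u. (\<forall>n. en n > 0) \<and> en \<longlonglongrightarrow> 0 \<and> range un \<subseteq> S \<and> u \<in> S \<and>
                 limitin \<sigma> un u sequentially \<longrightarrow>
                 Liminf sequentially (\<lambda>n. local_slope S d (\<phi>\<epsilon> (en n)) (un n))
                   \<ge> local_slope S d \<phi> u"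
    and eps_pos: "\<forall>\<tau>>0. \<epsilon> \<tau> > 0"
    and eps_lim: "(\<epsilon> \<longlongrightarrow> 0) (at_right 0)"
  shows "\<forall>u u\<tau>. u \<in> S \<and> (\<forall>\<tau>>0. u\<tau> \<tau> \<in> S) \<and> limitin \<sigma> u\<tau> u (at_right 0) \<and>
           (\<exists>C::real. \<forall>\<tau>>0. \<phi>\<epsilon> (\<epsilon> \<tau>) (u\<tau> \<tau>) \<le> ereal C \<and> d (u\<tau> \<tau>) u \<le> C) \<longrightarrow>
           Liminf (at_right 0)
             (\<lambda>\<tau>. (\<phi>\<epsilon> (\<epsilon> \<tau>) (u\<tau> \<tau>) - yosida S d \<tau> (\<phi>\<epsilon> (\<epsilon> \<tau>)) (u\<tau> \<tau>)) / ereal \<tau>)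
           \<ge> ereal (1/2) * (relaxed_slope S d \<sigma> \<phi> u)\<^sup>2"
proof (intro allI impI, elim conjE exE)
  fix u and u\<tau> :: "real \<Rightarrow> 'a" and C :: real
  assume "u \<in> S" and u\<tau>: "\<forall>\<tau>>0. u\<tau> \<tau> \<in> S" "limitin \<sigma> u\<tau> u (at_right 0)"
    and C: "\<forall>\<tau>>0. \<phi>\<epsilon> (\<epsilon> \<tau>) (u\<tau> \<tau>) \<le> ereal C \<and> d (u\<tau> \<tau>) u \<le> C"
  have adm: "coercive_lsc_functional S d \<sigma> (\<phi>\<epsilon> e) A B ustar" if "0 < e" for e
  proof (intro coercive_lsc_functional.intro coercive_lsc_functional_axioms.intro metric)
    show "\<And>x. x \<in> S \<Longrightarrow> ereal (- A - B * (d x ustar)\<^sup>2) \<le> \<phi>\<epsilon> e x"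
      using lower that by blast
    show "\<And>un u. range un \<subseteq> S \<Longrightarrow> u \<in> S \<Longrightarrow> \<exists>C. \<forall>n m. d (un n) (un m) \<le> C \<Longrightarrow>
        limitin \<sigma> un u sequentially \<Longrightarrow> \<phi>\<epsilon> e u \<le> Liminf sequentially (\<lambda>n. \<phi>\<epsilon> e (un n))"
      using lsc that by blast
    show "\<And>un :: nat \<Rightarrow> 'a. range un \<subseteq> S \<Longrightarrow> \<exists>C. \<forall>n m. d (un n) (un m) \<le> C \<and> \<phi>\<epsilon> e (un n) \<le> ereal C \<Longrightarrow>
        \<exists>r u. strict_mono r \<and> u \<in> S \<and> limitin \<sigma> (un \<circ> r) u sequentially"
      using cpt that by blast
  qed (use top compat AB in auto)
  have "relaxed_slope S d \<sigma> \<phi> u \<le> local_slope S d \<phi> u"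
    using relaxed_slope_le_local_slope[OF \<open>u \<in> S\<close> top] phi_proper(1) \<open>u \<in> S\<close> by blast
  then have "(relaxed_slope S d \<sigma> \<phi> u)\<^sup>2 \<le> (local_slope S d \<phi> u)\<^sup>2"
    by (rule ereal_power2_mono[OF relaxed_slope_nonneg])
  then have "ereal (1/2) * (relaxed_slope S d \<sigma> \<phi> u)\<^sup>2 \<le> ereal (1/2) * (local_slope S d \<phi> u)\<^sup>2"
    by (rule ereal_mult_left_mono) simp
  also have "\<dots> \<le> Liminf (at_right 0)
      (\<lambda>\<tau>. (\<phi>\<epsilon> (\<epsilon> \<tau>) (u\<tau> \<tau>) - yosida S d \<tau> (\<phi>\<epsilon> (\<epsilon> \<tau>)) (u\<tau> \<tau>)) / ereal \<tau>)"
    using local_slope_le_Liminf_yosida_quotient[OF adm slope eps_pos eps_lim AB(2) \<open>u \<in> S\<close> u\<tau> C] .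
  finally show "Liminf (at_right 0)
      (\<lambda>\<tau>. (\<phi>\<epsilon> (\<epsilon> \<tau>) (u\<tau> \<tau>) - yosida S d \<tau> (\<phi>\<epsilon> (\<epsilon> \<tau>)) (u\<tau> \<tau>)) / ereal \<tau>)
    \<ge> ereal (1/2) * (relaxed_slope S d \<sigma> \<phi> u)\<^sup>2" .
qed

end
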